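(* Let $G=(V,E)$ be an undirected graph with non-negative edge weights, let $S\subseteq V$ be non-empty, let $u,v\in V$ and let $P(u,v)$ be a shortest path between $u$ and $v$ in $G$. If $P(u,v)$ is not contained in $G_S$, then $\max(h_S(u),h_S(v))\le d_G(u,v)$.
   Context: $d_G(u,v)$ is the shortest-path distance in $G$; $h_S(u)=\min_{s\in S}d_G(u,s)$. For $v\in V$, $E_S(v)$ is the set of edges incident to $v$ whose weight is at most $h_S(v)$; $E_S=\bigcup_{v\in V}E_S(v)$ and $G_S=(V,E_S)$. "$P(u,v)$ is contained in $G_S$" means every edge of $P(u,v)$ is in $E_S$. *)

theory Defs
  imports "HOL-Library.Extended_Real"
begin

definition wgraph :: "'a set \<Rightarrow> 'a set set \<Rightarrow> ('a set \<Rightarrow> real) \<Rightarrow> bool" where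
  "wgraph V E w \<longleftrightarrow> finite V \<and> (\<forall>e\<in>E. \<exists>x y. e = {x, y} \<and> x \<in> V \<and> y \<in> V \<and> x \<noteq> y)"

definition path_edges :: "'a list \<Rightarrow> 'a set set" where
  "path_edges p = {{a, b} | a b. (a, b) \<in> set (zip p (tl p))}"

definition is_path :: "'a set \<Rightarrow> 'a set set \<Rightarrow> 'a \<Rightarrow> 'a \<Rightarrow> 'a list \<Rightarrow> bool" where
  "is_path V E u v p \<longleftrightarrow> p \<noteq> [] \<and> hd p = u \<and> last p = v \<and> distinct p \<and>
     set p \<subseteq> V \<and> path_edges p \<subseteq> E"

definition path_weight :: "('a set \<Rightarrow> real) \<Rightarrow> 'a list \<Rightarrow> real" where
  "path_weight w p = (\<Sum>(a, b)\<leftarrow>zip p (tl p). w {a, b})"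

text \<open>Shortest-path distance d_G(u,v); \<infinity> if no path exists.\<close>
definition gdist :: "'a set \<Rightarrow> 'a set set \<Rightarrow> ('a set \<Rightarrow> real) \<Rightarrow> 'a \<Rightarrow> 'a \<Rightarrow> ereal" where
  "gdist V E w u v = (INF p \<in> {p. is_path V E u v p}. ereal (path_weight w p))"

definition shortest_path :: "'a set \<Rightarrow> 'a set set \<Rightarrow> ('a set \<Rightarrow> real) \<Rightarrow> 'a \<Rightarrow> 'a \<Rightarrow> 'a list \<Rightarrow> bool" where
  "shortest_path V E w u v p \<longleftrightarrow> is_path V E u v p \<and> ereal (path_weight w p) = gdist V E w u v"

definition hS :: "'a set \<Rightarrow> 'a set set \<Rightarrow> ('a set \<Rightarrow> real) \<Rightarrow> 'a set \<Rightarrow> 'a \<Rightarrow> ereal" where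
  "hS V E w S u = (INF s \<in> S. gdist V E w u s)"

definition ES_v :: "'a set \<Rightarrow> 'a set set \<Rightarrow> ('a set \<Rightarrow> real) \<Rightarrow> 'a set \<Rightarrow> 'a \<Rightarrow> 'a set set" where
  "ES_v V E w S v = {e \<in> E. v \<in> e \<and> ereal (w e) \<le> hS V E w S v}"

definition ES :: "'a set \<Rightarrow> 'a set set \<Rightarrow> ('a set \<Rightarrow> real) \<Rightarrow> 'a set \<Rightarrow> 'a set set" where
  "ES V E w S = (\<Union>v\<in>V. ES_v V E w S v)"

end

theory Submission
  imports Defs
begin

text \<open>Let \<open>{a, b}\<close> be an edge of the shortest path \<open>P\<close> outside \<open>G\<^sub>S\<close>, so
  \<open>h\<^sub>S(a) < w{a,b}\<close> and \<open>h\<^sub>S(b) < w{a,b}\<close>. Walking along \<open>P\<close> from \<open>u\<close> to \<open>a\<close> and then along a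
  path from \<open>a\<close> to \<open>S\<close> lighter than \<open>w{a,b}\<close> gives a walk from \<open>u\<close> to \<open>S\<close> lighter than \<open>P\<close>;
  with non-negative weights it contains a path that is no heavier, so \<open>h\<^sub>S(u) < d\<^sub>G(u,v)\<close>.
  The same argument applied to the reversed path bounds \<open>h\<^sub>S(v)\<close>.\<close>

definition is_walk :: "'a set \<Rightarrow> 'a set set \<Rightarrow> 'a list \<Rightarrow> bool" where
  "is_walk V E p \<longleftrightarrow> p \<noteq> [] \<and> set p \<subseteq> V \<and> path_edges p \<subseteq> E"

lemma is_path_iff_walk:
  "is_path V E u v p \<longleftrightarrow> is_walk V E p \<and> hd p = u \<and> last p = v \<and> distinct p"
  by (auto simp: is_path_def is_walk_def)

lemma path_weight_simps [simp]:
  "path_weight w [] = 0" "path_weight w [a] = 0"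
  "path_weight w (a # b # p) = w {a, b} + path_weight w (b # p)"
  by (simp_all add: path_weight_def)

lemma path_edges_simps [simp]:
  "path_edges [] = {}" "path_edges [a] = {}"
  "path_edges (a # b # p) = insert {a, b} (path_edges (b # p))"
  by (auto simp: path_edges_def)

text \<open>The splitting lemmas below are not simp rules: their right-hand sides match the
  left-hand side again (with \<open>ys = []\<close>), so they are only used instantiated.\<close>

lemma path_weight_append:
  "path_weight w (xs @ y # ys) = path_weight w (xs @ [y]) + path_weight w (y # ys)"
  by (induction xs rule: induct_list012) auto

lemma path_edges_append:
  "path_edges (xs @ y # ys) = path_edges (xs @ [y]) \<union> path_edges (y # ys)"
  by (induction xs rule: induct_list012) auto

lemma path_weight_rev: "path_weight w (rev p) = path_weight w p"
proof (induction p rule: induct_list012)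
  case (3 x y zs)
  then show ?case
    using path_weight_append[of w "rev zs" y "[x]"] by (simp add: insert_commute)
qed simp_all

lemma path_edges_rev: "path_edges (rev p) = path_edges p"
proof (induction p rule: induct_list012)
  case (3 x y zs)
  then show ?case
    using path_edges_append[of "rev zs" y "[x]"] by (auto simp: insert_commute)
qed simp_all

lemma is_walk_rev: "is_walk V E (rev p) \<longleftrightarrow> is_walk V E p"
  by (simp add: is_walk_def path_edges_rev)

lemma is_walk_append:
  "is_walk V E (xs @ y # ys) \<longleftrightarrow> is_walk V E (xs @ [y]) \<and> is_walk V E (y # ys)"
  unfolding is_walk_def path_edges_append[of xs y ys] by auto

lemma path_weight_nonneg:
  assumes "\<forall>e\<in>E. 0 \<le> w e" and "path_edges p \<subseteq> E"
  shows "0 \<le> path_weight w p"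
  using assms(2)
proof (induction p rule: induct_list012)
  case (3 x y zs)
  then have "0 \<le> path_weight w (y # zs)" by simp
  moreover have "{x, y} \<in> E" using 3 by simp
  ultimately show ?case using assms(1) by simp
qed simp_all

lemma path_edges_decomp:
  assumes "e \<in> path_edges p"
  obtains xs a b ys where "p = xs @ a # b # ys" and "e = {a, b}"
proof -
  obtain a b where "e = {a, b}" and "(a, b) \<in> set (zip p (tl p))"
    using assms by (auto simp: path_edges_def)
  moreover have "\<exists>xs ys. p = xs @ a # b # ys" if "(a, b) \<in> set (zip p (tl p))" for a b
    using that
  proof (induction p rule: induct_list012)
    case (3 x y zs)
    then consider "a = x" "b = y" | "\<exists>xs ys. y # zs = xs @ a # b # ys"
      by auto
    then show ?case
      by cases (metis append_Nil, metis append_Cons)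
  qed simp_all
  ultimately show thesis using that by blast
qed

text \<open>Cutting out a closed subwalk never increases the weight, since weights are non-negative.\<close>

lemma walk_contains_path:
  assumes "\<forall>e\<in>E. 0 \<le> w e" and "is_walk V E p"
  shows "\<exists>p'. is_path V E (hd p) (last p) p' \<and> path_weight w p' \<le> path_weight w p"
  using assms(2)
proof (induction p rule: measure_induct_rule[of length])
  case (less p)
  show ?case
  proof (cases "distinct p")
    case True
    then show ?thesis using less.prems by (auto simp: is_path_iff_walk)
  next
    case False
    then obtain xs y ys zs where p: "p = xs @ [y] @ ys @ [y] @ zs"
      using not_distinct_decomp by blast
    define p' where "p' = xs @ y # zs"
    have walks: "is_walk V E (xs @ [y])" "is_walk V E (y # ys @ [y])" "is_walk V E (y # zs)"
      using less.prems is_walk_append[of V E xs y "ys @ y # zs"]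
        is_walk_append[of V E "y # ys" y zs] p by auto
    have "path_weight w p = path_weight w (xs @ [y]) + path_weight w (y # ys @ [y])
        + path_weight w (y # zs)"
      using path_weight_append[of w xs y "ys @ y # zs"] path_weight_append[of w "y # ys" y zs] p
      by simp
    moreover have "0 \<le> path_weight w (y # ys @ [y])"
      using path_weight_nonneg[OF assms(1)] walks(2) by (simp add: is_walk_def)
    ultimately have "path_weight w p' \<le> path_weight w p"
      using path_weight_append[of w xs y zs] by (simp add: p'_def)
    moreover have "is_walk V E p'" "length p' < length p"
      using walks p is_walk_append[of V E xs y zs] by (simp_all add: p'_def)
    moreover have "hd p' = hd p" "last p' = last p"
      using p by (simp_all add: p'_def hd_append last_append)
    ultimately show ?thesis using less.IH by force
  qed
qed

lemma gdist_le_walk: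
  assumes "\<forall>e\<in>E. 0 \<le> w e" and "is_walk V E p"
  shows "gdist V E w (hd p) (last p) \<le> ereal (path_weight w p)"
proof -
  obtain p' where "is_path V E (hd p) (last p) p'" and "path_weight w p' \<le> path_weight w p"
    using walk_contains_path[OF assms] by blast
  then show ?thesis
    unfolding gdist_def by (intro INF_lower2[of p']) auto
qed

lemma hS_less_weight_if_notin_ES:
  assumes "e \<in> E" and "e \<notin> ES V E w S" and "x \<in> e" and "x \<in> V"
  shows "hS V E w S x < ereal (w e)"
  using assms by (auto simp: ES_def ES_v_def not_le)

lemma hS_le_gdist: "s \<in> S \<Longrightarrow> hS V E w S x \<le> gdist V E w x s"
  unfolding hS_def by (rule INF_lower)

lemma hS_less_via_walk:
  assumes "\<forall>e\<in>E. 0 \<le> w e" and "is_walk V E (p @ [a])" and "hS V E w S a < ereal c"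
  shows "hS V E w S (hd (p @ [a])) < ereal (path_weight w (p @ [a]) + c)"
proof -
  obtain s where s: "s \<in> S" "gdist V E w a s < ereal c"
    using assms(3) by (auto simp: hS_def INF_less_iff)
  obtain q where q: "is_path V E a s q" "path_weight w q < c"
    using s(2) by (auto simp: gdist_def INF_less_iff)
  then obtain q' where q': "q = a # q'"
    by (cases q) (auto simp: is_path_def)
  have "is_walk V E (p @ q)"
    using assms(2) q(1) is_walk_append[of V E p a q'] by (simp add: q' is_path_iff_walk)
  moreover have "hd (p @ q) = hd (p @ [a])" "last (p @ q) = s"
    using q(1) by (simp_all add: q' hd_append is_path_def)
  ultimately have "gdist V E w (hd (p @ [a])) s \<le> ereal (path_weight w (p @ q))"
    using gdist_le_walk[OF assms(1)] by metis
  also have "\<dots> < ereal (path_weight w (p @ [a]) + c)"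
    using q(2) path_weight_append[of w p a q'] by (simp add: q')
  finally show ?thesis
    using hS_le_gdist[OF s(1)] by (rule order.strict_trans1[rotated])
qed

lemma hS_hd_less_path_weight:
  assumes "\<forall>e\<in>E. 0 \<le> w e" and "is_walk V E (xs @ a # b # ys)"
    and "hS V E w S a < ereal (w {a, b})"
  shows "hS V E w S (hd (xs @ a # b # ys)) < ereal (path_weight w (xs @ a # b # ys))"
proof -
  have walks: "is_walk V E (xs @ [a])" "is_walk V E (a # b # ys)"
    using assms(2) is_walk_append[of V E xs a "b # ys"] by blast+
  have "0 \<le> path_weight w (b # ys)"
    using path_weight_nonneg[OF assms(1)] walks(2) by (simp add: is_walk_def)
  have "hS V E w S (hd (xs @ [a])) < ereal (path_weight w (xs @ [a]) + w {a, b})"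
    using hS_less_via_walk[OF assms(1) walks(1) assms(3)] .
  also have "\<dots> \<le> ereal (path_weight w (xs @ a # b # ys))"
    using \<open>0 \<le> path_weight w (b # ys)\<close> path_weight_append[of w xs a "b # ys"] by simp
  finally show ?thesis
    by (cases xs) simp_all
qed

theorem lemma4:
  fixes V :: "'a set" and E :: "'a set set" and w :: "'a set \<Rightarrow> real"
    and S :: "'a set" and u v :: 'a and P :: "'a list"
  assumes "wgraph V E w"
    and "\<forall>e\<in>E. 0 \<le> w e"
    and "S \<subseteq> V" and "S \<noteq> {}"
    and "u \<in> V" and "v \<in> V"
    and "shortest_path V E w u v P"
    and "\<not> path_edges P \<subseteq> ES V E w S"
  shows "max (hS V E w S u) (hS V E w S v) \<le> gdist V E w u v"
proof -
  have P: "is_walk V E P" "hd P = u" "last P = v"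
    and dist: "gdist V E w u v = ereal (path_weight w P)"
    using assms(7) by (auto simp: shortest_path_def is_path_iff_walk)
  obtain e where e: "e \<in> path_edges P" "e \<notin> ES V E w S"
    using assms(8) by blast
  then obtain xs a b ys where P_eq: "P = xs @ a # b # ys" and ab: "e = {a, b}"
    using path_edges_decomp by blast
  have walk: "is_walk V E (xs @ a # b # ys)"
    using P(1) P_eq by simp
  then have "e \<in> E" "a \<in> V" "b \<in> V"
    using e(1) P_eq by (auto simp: is_walk_def)
  then have ha: "hS V E w S a < ereal (w {a, b})" and hb: "hS V E w S b < ereal (w {b, a})"
    using hS_less_weight_if_notin_ES[OF \<open>e \<in> E\<close> e(2)] ab by (auto simp: insert_commute)
  have P_rev: "rev P = rev ys @ b # a # rev xs"
    using P_eq by simp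
  have "hS V E w S (hd P) < ereal (path_weight w P)"
    using hS_hd_less_path_weight[OF assms(2) walk ha] P_eq by simp
  moreover have "hS V E w S (hd (rev P)) < ereal (path_weight w (rev P))"
    using hS_hd_less_path_weight[OF assms(2) _ hb] P(1) is_walk_rev[of V E P]
    unfolding P_rev by simp
  ultimately show ?thesis
    using P dist by (simp add: hd_rev path_weight_rev less_imp_le)
qed

end
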